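(* Let $k$ be a positive integer and let $\sigma\in S_n$ have at least one $k$th root. Let $\ell_1,\dots,\ell_m$ be the distinct cycle lengths occurring in the disjoint cycle decomposition of $\sigma$ (fixed points counted as cycles of length $1$), and for each $i$ let $M_i\subseteq\{1,\dots,n\}$ be the set of points lying in cycles of $\sigma$ of length $\ell_i$ and $\sigma_i$ the restriction of $\sigma$ to $M_i$, viewed as a permutation of $M_i$. Then \[ \operatorname{re}_k(\sigma)-\operatorname{ro}_k(\sigma)=\prod_{i=1}^m\big(\operatorname{re}_k(\sigma_i)-\operatorname{ro}_k(\sigma_i)\big), \] where $\operatorname{re}_k(\sigma)$, $\operatorname{ro}_k(\sigma)$ are counted in $S_n$ and $\operatorname{re}_k(\sigma_i)$, $\operatorname{ro}_k(\sigma_i)$ are counted in the symmetric group on $M_i$.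
   Context: For a permutation $\pi$ of a finite set $M$, a $k$th root of $\pi$ is a permutation $\tau$ of $M$ with $\tau^k=\pi$. $\operatorname{re}_k(\pi)$ (resp. $\operatorname{ro}_k(\pi)$) denotes the number of $k$th roots of $\pi$ that are even (resp. odd) permutations of $M$. *)

theory Defs
  imports "HOL-Combinatorics.Combinatorics"
begin

definition re :: "nat \<Rightarrow> 'a set \<Rightarrow> ('a \<Rightarrow> 'a) \<Rightarrow> nat" where
  "re k M p = card {tau. tau permutes M \<and> tau ^^ k = p \<and> evenperm tau}"

definition ro :: "nat \<Rightarrow> 'a set \<Rightarrow> ('a \<Rightarrow> 'a) \<Rightarrow> nat" where
  "ro k M p = card {tau. tau permutes M \<and> tau ^^ k = p \<and> \<not> evenperm tau}"

definition cyc_len :: "('a \<Rightarrow> 'a) \<Rightarrow> 'a \<Rightarrow> nat" where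
  "cyc_len sigma x = card (orbit sigma x)"

definition cyc_block :: "('a \<Rightarrow> 'a) \<Rightarrow> 'a set \<Rightarrow> nat \<Rightarrow> 'a set" where
  "cyc_block sigma M l = {x \<in> M. cyc_len sigma x = l}"

end

theory Submission
  imports Defs
begin

text \<open>Summing \<open>sign \<tau>\<close> over all \<open>k\<close>-th roots \<open>\<tau>\<close> gives \<open>re - ro\<close>. A root \<open>\<tau>\<close> of \<open>\<sigma>\<close> commutes
  with \<open>\<sigma>\<close>, so it maps each cycle of \<open>\<sigma>\<close> onto a cycle of the same length and leaves every
  block \<open>M\<^sub>i\<close> invariant. Restriction to the blocks is therefore a bijection from the roots of \<open>\<sigma>\<close>
  onto the tuples of roots of the \<open>\<sigma>\<^sub>i\<close>, and the sign of a product of permutations with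
  disjoint supports is the product of their signs.\<close>

definition kth_roots :: "nat \<Rightarrow> 'a set \<Rightarrow> ('a \<Rightarrow> 'a) \<Rightarrow> ('a \<Rightarrow> 'a) set" where
  "kth_roots k M p = {\<tau>. \<tau> permutes M \<and> \<tau> ^^ k = p}"

definition root_sign_sum :: "nat \<Rightarrow> 'a set \<Rightarrow> ('a \<Rightarrow> 'a) \<Rightarrow> int" where
  "root_sign_sum k M p = (\<Sum>\<tau>\<in>kth_roots k M p. sign \<tau>)"

lemma finite_kth_roots: "finite M \<Longrightarrow> finite (kth_roots k M p)"
  by (rule finite_subset[OF _ finite_permutations[of M]]) (auto simp: kth_roots_def)

lemma re_minus_ro_eq_root_sign_sum:
  assumes "finite M"
  shows "int (re k M p) - int (ro k M p) = root_sign_sum k M p"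
proof -
  let ?E = "{\<tau>. \<tau> permutes M \<and> \<tau> ^^ k = p \<and> evenperm \<tau>}"
  let ?O = "{\<tau>. \<tau> permutes M \<and> \<tau> ^^ k = p \<and> \<not> evenperm \<tau>}"
  have "finite ?E" "finite ?O"
    using finite_kth_roots[OF assms, of k p] by (auto simp: kth_roots_def elim!: finite_subset[rotated])
  moreover have "kth_roots k M p = ?E \<union> ?O" by (auto simp: kth_roots_def)
  ultimately have "root_sign_sum k M p = sum sign ?E + sum sign ?O"
    unfolding root_sign_sum_def by (simp add: sum.union_disjoint disjoint_iff)
  also have "\<dots> = int (card ?E) - int (card ?O)" by (simp add: sign_def)
  finally show ?thesis by (simp add: re_def ro_def)
qed

lemma funpow_apply_commute:
  assumes "\<And>y. f (g y) = g (f y)"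
  shows "(g ^^ n) (f x) = f ((g ^^ n) x)"
  by (induction n) (simp_all add: assms)

lemma orbit_image_commute:
  assumes "\<And>y. \<tau> (p y) = p (\<tau> y)"
  shows "orbit p (\<tau> x) = \<tau> ` orbit p x"
  by (auto simp: orbit_altdef funpow_apply_commute[of \<tau> p, OF assms])

lemma cyc_len_commute:
  assumes "inj \<tau>" "\<And>y. \<tau> (p y) = p (\<tau> y)"
  shows "cyc_len p (\<tau> x) = cyc_len p x"
  unfolding cyc_len_def orbit_image_commute[of \<tau> p, OF assms(2)]
  using assms(1) by (simp add: card_image inj_on_subset)

lemma cyc_len_perm_restrict:
  assumes "\<sigma> ` M \<subseteq> M" "x \<in> M"
  shows "cyc_len (perm_restrict \<sigma> M) x = cyc_len \<sigma> x"
  unfolding cyc_len_def using assms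
  by (subst orbit_cong0[where A = M and g = \<sigma>]) (auto simp: perm_restrict_simps)

lemma kth_root_commute:
  assumes "\<tau> ^^ k = p"
  shows "\<tau> (p y) = p (\<tau> y)"
  using funpow_swap1[of \<tau> k y] assms by simp

lemma permutes_perm_restrict:
  assumes "inj \<tau>" "finite A" "\<tau> ` A \<subseteq> A"
  shows "perm_restrict \<tau> A permutes A"
proof (rule bij_imp_permutes)
  have "inj_on \<tau> A" using assms(1) by (rule inj_on_subset) simp
  with assms(2,3) have "bij_betw \<tau> A A" by (simp add: bij_betw_def endo_inj_surj)
  then show "bij_betw (perm_restrict \<tau> A) A A"
    by (rule bij_betw_cong[THEN iffD1, rotated]) (simp add: perm_restrict_simps)
qed (simp add: perm_restrict_simps)

lemma funpow_perm_restrict: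
  assumes "\<tau> ` A \<subseteq> A"
  shows "perm_restrict \<tau> A ^^ k = perm_restrict (\<tau> ^^ k) A"
proof (induction k)
  case (Suc k)
  have "(\<tau> ^^ k) x \<in> A" if "x \<in> A" for x
    using that assms by (induction k) auto
  with Suc show ?case by (auto simp: perm_restrict_def fun_eq_iff)
qed (simp add: perm_restrict_def fun_eq_iff)

lemma perm_restrict_comp_eq:
  assumes "\<tau> permutes A \<union> B" "\<tau> ` A \<subseteq> A" "\<tau> ` B \<subseteq> B" "A \<inter> B = {}"
  shows "perm_restrict \<tau> A \<circ> perm_restrict \<tau> B = \<tau>"
  using assms by (auto simp: perm_restrict_def fun_eq_iff permutes_not_in)

lemma permutes_disjoint_comp_commute:
  assumes a: "a permutes A" and b: "b permutes B" and disj: "A \<inter> B = {}"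
  shows "a \<circ> b = b \<circ> a"
proof
  fix x
  show "(a \<circ> b) x = (b \<circ> a) x"
  proof (cases "x \<in> A")
    case True
    moreover have "a x \<in> A" using a True by (simp add: permutes_in_image)
    ultimately have "x \<notin> B" "a x \<notin> B" using disj by blast+
    with b show ?thesis by (simp add: permutes_not_in)
  next
    case False
    with b disj have "b x \<notin> A" by (cases "x \<in> B") (auto simp: permutes_in_image permutes_not_in)
    with a False show ?thesis by (simp add: permutes_not_in)
  qed
qed

lemma funpow_comp_commute:
  assumes "f \<circ> g = g \<circ> f"
  shows "(f \<circ> g) ^^ n = f ^^ n \<circ> g ^^ n"
proof (induction n)
  case (Suc n)
  have "g ((f ^^ n) x) = (f ^^ n) (g x)" for x
    using funpow_apply_commute[of g f n x] assms by (metis comp_apply)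
  with Suc show ?case by (simp add: fun_eq_iff)
qed simp

lemma perm_restrict_comp_disjoint:
  assumes "a permutes A" "b permutes B" "A \<inter> B = {}"
  shows "perm_restrict (a \<circ> b) A = a"
  using assms by (auto simp: perm_restrict_def fun_eq_iff permutes_not_in disjoint_iff)

lemma kth_roots_Un_bij:
  assumes fin: "finite A" "finite B" and disj: "A \<inter> B = {}" and p: "p permutes A \<union> B"
    and inv: "\<And>\<tau>. \<tau> \<in> kth_roots k (A \<union> B) p \<Longrightarrow> \<tau> ` A \<subseteq> A \<and> \<tau> ` B \<subseteq> B"
  shows "bij_betw (\<lambda>(a, b). a \<circ> b)
           (kth_roots k A (perm_restrict p A) \<times> kth_roots k B (perm_restrict p B))
           (kth_roots k (A \<union> B) p)"
proof (rule bij_betw_byWitness[where f' = "\<lambda>\<tau>. (perm_restrict \<tau> A, perm_restrict \<tau> B)"])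
  show "\<forall>\<tau>\<in>kth_roots k (A \<union> B) p. (\<lambda>(a, b). a \<circ> b) (perm_restrict \<tau> A, perm_restrict \<tau> B) = \<tau>"
    using inv disj by (auto simp: kth_roots_def perm_restrict_comp_eq)
  show "(\<lambda>\<tau>. (perm_restrict \<tau> A, perm_restrict \<tau> B)) ` kth_roots k (A \<union> B) p
      \<subseteq> kth_roots k A (perm_restrict p A) \<times> kth_roots k B (perm_restrict p B)"
  proof (rule image_subsetI)
    fix \<tau> assume \<tau>: "\<tau> \<in> kth_roots k (A \<union> B) p"
    then have "inj \<tau>" "\<tau> ^^ k = p" by (auto simp: kth_roots_def permutes_inj)
    with inv[OF \<tau>] fin show "(perm_restrict \<tau> A, perm_restrict \<tau> B)
        \<in> kth_roots k A (perm_restrict p A) \<times> kth_roots k B (perm_restrict p B)"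
      by (auto simp: kth_roots_def permutes_perm_restrict funpow_perm_restrict)
  qed
  have split: "perm_restrict (a \<circ> b) A = a \<and> perm_restrict (a \<circ> b) B = b \<and>
      a \<circ> b \<in> kth_roots k (A \<union> B) p"
    if "a \<in> kth_roots k A (perm_restrict p A)" "b \<in> kth_roots k B (perm_restrict p B)" for a b
  proof -
    from that have a: "a permutes A" "a ^^ k = perm_restrict p A"
      and b: "b permutes B" "b ^^ k = perm_restrict p B" by (auto simp: kth_roots_def)
    have comm: "a \<circ> b = b \<circ> a" using a(1) b(1) disj by (rule permutes_disjoint_comp_commute)
    have "perm_restrict p A permutes A" "perm_restrict p B permutes B"
      using permutes_funpow[OF a(1), of k] permutes_funpow[OF b(1), of k] by (simp_all only: a(2) b(2))
    then have "perm_restrict p A \<circ> perm_restrict p B = p"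
      using disj p by (simp add: perm_restrict_union)
    then have "(a \<circ> b) ^^ k = p"
      by (simp add: funpow_comp_commute[OF comm] a(2) b(2))
    then have "a \<circ> b \<in> kth_roots k (A \<union> B) p"
      using permutes_compose[OF permutes_subset[OF b(1)] permutes_subset[OF a(1)]]
      by (simp add: kth_roots_def)
    moreover have "perm_restrict (b \<circ> a) B = b"
      using perm_restrict_comp_disjoint[OF b(1) a(1)] disj by (simp add: Int_commute)
    ultimately show ?thesis
      using perm_restrict_comp_disjoint[OF a(1) b(1) disj] comm by simp
  qed
  show "\<forall>ab\<in>kth_roots k A (perm_restrict p A) \<times> kth_roots k B (perm_restrict p B).
      (\<lambda>\<tau>. (perm_restrict \<tau> A, perm_restrict \<tau> B)) ((\<lambda>(a, b). a \<circ> b) ab) = ab"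
    using split by auto
  show "(\<lambda>(a, b). a \<circ> b) ` (kth_roots k A (perm_restrict p A) \<times> kth_roots k B (perm_restrict p B))
      \<subseteq> kth_roots k (A \<union> B) p"
    using split by auto
qed

lemma root_sign_sum_Un:
  assumes "finite A" "finite B" "A \<inter> B = {}" "p permutes A \<union> B"
    and "\<And>\<tau>. \<tau> \<in> kth_roots k (A \<union> B) p \<Longrightarrow> \<tau> ` A \<subseteq> A \<and> \<tau> ` B \<subseteq> B"
  shows "root_sign_sum k (A \<union> B) p
       = root_sign_sum k A (perm_restrict p A) * root_sign_sum k B (perm_restrict p B)"
proof -
  let ?R = "kth_roots k A (perm_restrict p A) \<times> kth_roots k B (perm_restrict p B)"
  have "root_sign_sum k (A \<union> B) p = (\<Sum>(a, b)\<in>?R. sign (a \<circ> b))"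
    unfolding root_sign_sum_def
    using sum.reindex_bij_betw[OF kth_roots_Un_bij[OF assms], where g = sign]
    by (simp add: case_prod_beta)
  also have "\<dots> = (\<Sum>(a, b)\<in>?R. sign a * sign b)"
    using assms(1,2)
    by (intro sum.cong refl) (auto simp: kth_roots_def sign_compose permutes_imp_permutation)
  also have "\<dots> = root_sign_sum k A (perm_restrict p A) * root_sign_sum k B (perm_restrict p B)"
    unfolding root_sign_sum_def sum_product sum.cartesian_product by (simp add: case_prod_beta)
  finally show ?thesis .
qed

lemma root_sign_sum_empty: "root_sign_sum k {} id = 1"
proof -
  have "kth_roots k {} (id :: 'a \<Rightarrow> 'a) = {id}" by (auto simp: kth_roots_def permutes_empty)
  then show ?thesis unfolding root_sign_sum_def by (simp add: sign_id)
qed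

lemma cyc_len_apply:
  assumes "\<sigma> permutes N"
  shows "cyc_len \<sigma> (\<sigma> x) = cyc_len \<sigma> x"
  using cyc_len_commute[OF permutes_inj[OF assms]] by simp

lemma kth_root_preserves_cyc_len:
  assumes inv: "\<sigma> ` M \<subseteq> M" and \<tau>: "\<tau> \<in> kth_roots k M (perm_restrict \<sigma> M)" and x: "x \<in> M"
  shows "\<tau> x \<in> M \<and> cyc_len \<sigma> (\<tau> x) = cyc_len \<sigma> x"
proof -
  let ?p = "perm_restrict \<sigma> M"
  have \<tau>M: "\<tau> permutes M" "\<tau> ^^ k = ?p" using \<tau> by (auto simp: kth_roots_def)
  then have "\<tau> x \<in> M" using x by (simp add: permutes_in_image)
  moreover have "cyc_len ?p (\<tau> x) = cyc_len ?p x"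
    using cyc_len_commute[of \<tau> ?p, OF permutes_inj[OF \<tau>M(1)] kth_root_commute[OF \<tau>M(2)]] .
  ultimately show ?thesis using x inv by (simp add: cyc_len_perm_restrict)
qed

lemma root_sign_sum_cyc_blocks:
  assumes \<sigma>: "\<sigma> permutes N" and "finite N" "finite L"
  shows "root_sign_sum k {x \<in> N. cyc_len \<sigma> x \<in> L} (perm_restrict \<sigma> {x \<in> N. cyc_len \<sigma> x \<in> L})
    = (\<Prod>l\<in>L. root_sign_sum k (cyc_block \<sigma> N l) (perm_restrict \<sigma> (cyc_block \<sigma> N l)))"
  using \<open>finite L\<close>
proof (induction L rule: finite_induct)
  case empty
  have "perm_restrict \<sigma> {} = id" by (auto simp: perm_restrict_def)
  then show ?case using root_sign_sum_empty[of k] by (simp add: id_def)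
next
  case (insert l L)
  define M where "M = {x \<in> N. cyc_len \<sigma> x \<in> insert l L}"
  define A where "A = cyc_block \<sigma> N l"
  define B where "B = {x \<in> N. cyc_len \<sigma> x \<in> L}"
  have MAB: "M = A \<union> B" and disj: "A \<inter> B = {}"
    using insert.hyps(2) by (auto simp: M_def A_def B_def cyc_block_def)
  have inv: "\<sigma> ` M \<subseteq> M" using \<sigma> by (auto simp: M_def permutes_in_image cyc_len_apply)
  then have "perm_restrict \<sigma> M permutes A \<union> B"
    using \<open>finite N\<close> by (simp add: MAB[symmetric] M_def permutes_perm_restrict permutes_inj[OF \<sigma>])
  moreover have "\<tau> ` A \<subseteq> A \<and> \<tau> ` B \<subseteq> B" if "\<tau> \<in> kth_roots k (A \<union> B) (perm_restrict \<sigma> M)" for \<tau>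
    using kth_root_preserves_cyc_len[OF inv, of \<tau> k] that
    by (auto simp: MAB[symmetric]) (auto simp: M_def A_def B_def cyc_block_def)
  ultimately have "root_sign_sum k M (perm_restrict \<sigma> M)
      = root_sign_sum k A (perm_restrict \<sigma> A) * root_sign_sum k B (perm_restrict \<sigma> B)"
    using root_sign_sum_Un[OF _ _ disj] \<open>finite N\<close> MAB
    by (simp add: perm_restrict_perm_restrict Int_absorb1 Int_absorb2 A_def B_def cyc_block_def)
  then show ?case using insert.IH insert.hyps by (simp add: M_def A_def B_def)
qed

theorem lemma1:
  fixes k n :: nat and sigma :: "nat \<Rightarrow> nat"
  assumes "k > 0"
    and "sigma permutes {1..n}"
    and "\<exists>tau. tau permutes {1..n} \<and> tau ^^ k = sigma"
  shows "int (re k {1..n} sigma) - int (ro k {1..n} sigma)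
       = (\<Prod>l \<in> cyc_len sigma ` {1..n}.
            int (re k (cyc_block sigma {1..n} l) (perm_restrict sigma (cyc_block sigma {1..n} l)))
          - int (ro k (cyc_block sigma {1..n} l) (perm_restrict sigma (cyc_block sigma {1..n} l))))"
proof -
  have all_blocks: "{x \<in> {1..n}. cyc_len sigma x \<in> cyc_len sigma ` {1..n}} = {1..n}" by auto
  have "int (re k {1..n} sigma) - int (ro k {1..n} sigma) = root_sign_sum k {1..n} sigma"
    by (simp add: re_minus_ro_eq_root_sign_sum)
  also have "\<dots> = (\<Prod>l \<in> cyc_len sigma ` {1..n}.
      root_sign_sum k (cyc_block sigma {1..n} l) (perm_restrict sigma (cyc_block sigma {1..n} l)))"
    using root_sign_sum_cyc_blocks[OF assms(2), of "cyc_len sigma ` {1..n}" k]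
    unfolding all_blocks perm_restrict_id[OF assms(2)] by simp
  also have "\<dots> = (\<Prod>l \<in> cyc_len sigma ` {1..n}.
            int (re k (cyc_block sigma {1..n} l) (perm_restrict sigma (cyc_block sigma {1..n} l)))
          - int (ro k (cyc_block sigma {1..n} l) (perm_restrict sigma (cyc_block sigma {1..n} l))))"
    by (intro prod.cong refl re_minus_ro_eq_root_sign_sum[symmetric]) (simp add: cyc_block_def)
  finally show ?thesis .
qed

end
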